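(* Every instance of Leivant's principle $\Box(B\vee C)\to\Box(\Box B\vee C)$ is derivable in $\mathsf{iK4}$ extended by the schema $\mathsf{Le}^+$ (i.e. $\mathsf{iK4}\vdash\mathsf{Le}^+\to\mathsf{Le}$).
   Context: Modal language: propositional variables, $\bot$, $\wedge,\vee,\to$, $\Box$; atomic = variables and $\bot$; $\boxdot A:=A\wedge\Box A$. $\mathsf{iK4}$: intuitionistic propositional logic in the modal language plus $\Box(A\to B)\to(\Box A\to\Box B)$ and $\Box A\to\Box\Box A$, closed under modus ponens and necessitation. $\mathsf{NOI}$: propositions in which every $\to$ lies in the scope of a $\Box$. Leivant's translation: $A^l=A$ for atomic/boxed $A$; $(A\wedge B)^l=A^l\wedge B^l$; $(A\vee B)^l=\boxdot A^l\vee\boxdot B^l$; $(A\to B)^l=A\to B^l$ if $A\in\mathsf{NOI}$, else $A\to B$. $\mathsf{Le}^+$ is the schema $\Box A\to\Box A^l$; $\mathsf{Le}$ is the schema $\Box(B\vee C)\to\Box(\Box B\vee C)$. *)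

theory Defs
  imports Main
begin

datatype form =
    Var nat
  | Bot
  | And form form
  | Or form form
  | Imp form form
  | Box form

definition boxdot :: "form \<Rightarrow> form" where
  "boxdot A = And A (Box A)"

fun noi :: "form \<Rightarrow> bool" where
  "noi (Var p) = True"
| "noi Bot = True"
| "noi (And A B) = (noi A \<and> noi B)"
| "noi (Or A B) = (noi A \<and> noi B)"
| "noi (Imp A B) = False"
| "noi (Box A) = True"

fun lv :: "form \<Rightarrow> form" where
  "lv (Var p) = Var p"
| "lv Bot = Bot"
| "lv (Box A) = Box A"
| "lv (And A B) = And (lv A) (lv B)"
| "lv (Or A B) = Or (boxdot (lv A)) (boxdot (lv B))"
| "lv (Imp A B) = (if noi A then Imp A (lv B) else Imp A B)"

inductive iK4Leplus :: "form \<Rightarrow> bool" where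
  ax1: "iK4Leplus (Imp A (Imp B A))"
| ax2: "iK4Leplus (Imp (Imp A (Imp B C)) (Imp (Imp A B) (Imp A C)))"
| ax3: "iK4Leplus (Imp (And A B) A)"
| ax4: "iK4Leplus (Imp (And A B) B)"
| ax5: "iK4Leplus (Imp A (Imp B (And A B)))"
| ax6: "iK4Leplus (Imp A (Or A B))"
| ax7: "iK4Leplus (Imp B (Or A B))"
| ax8: "iK4Leplus (Imp (Imp A C) (Imp (Imp B C) (Imp (Or A B) C)))"
| ax9: "iK4Leplus (Imp Bot A)"
| axK: "iK4Leplus (Imp (Box (Imp A B)) (Imp (Box A) (Box B)))"
| ax4m: "iK4Leplus (Imp (Box A) (Box (Box A)))"
| axLeplus: "iK4Leplus (Imp (Box A) (Box (lv A)))"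
| mp: "iK4Leplus (Imp A B) \<Longrightarrow> iK4Leplus A \<Longrightarrow> iK4Leplus B"
| nec: "iK4Leplus A \<Longrightarrow> iK4Leplus (Box A)"

end

theory Submission
  imports Defs
begin

text \<open>Every formula is implied by its Leivant translation: the translation only strengthens
disjuncts to their boxdots and consequents of implications to their translations. Hence the
instance \<open>\<Box>(B \<or> C) \<rightarrow> \<Box>(\<boxdot>B\<^sup>l \<or> \<boxdot>C\<^sup>l)\<close> of \<open>Le\<^sup>+\<close> yields Leivant's principle
after weakening \<open>\<boxdot>B\<^sup>l\<close> to \<open>\<Box>B\<close> and \<open>\<boxdot>C\<^sup>l\<close> to \<open>C\<close> under the box.\<close>

lemma imp_refl: "iK4Leplus (Imp A A)"
proof -
  have "iK4Leplus (Imp (Imp A (Imp (Imp A A) A)) (Imp (Imp A (Imp A A)) (Imp A A)))"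
    by (rule ax2)
  then have "iK4Leplus (Imp (Imp A (Imp A A)) (Imp A A))"
    using ax1 mp by blast
  then show ?thesis
    using ax1 mp by blast
qed

lemma imp_weaken: "iK4Leplus B \<Longrightarrow> iK4Leplus (Imp A B)"
  using ax1 mp by blast

lemma imp_mp: "iK4Leplus (Imp A (Imp B C)) \<Longrightarrow> iK4Leplus (Imp A B) \<Longrightarrow> iK4Leplus (Imp A C)"
  using ax2 mp by blast

lemma imp_trans: "iK4Leplus (Imp A B) \<Longrightarrow> iK4Leplus (Imp B C) \<Longrightarrow> iK4Leplus (Imp A C)"
  using imp_mp imp_weaken by blast

lemma imp_mono_concl: "iK4Leplus (Imp B D) \<Longrightarrow> iK4Leplus (Imp (Imp A B) (Imp A D))"
  using ax2 imp_weaken mp by blast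

lemma and_intro: "iK4Leplus (Imp A B) \<Longrightarrow> iK4Leplus (Imp A C) \<Longrightarrow> iK4Leplus (Imp A (And B C))"
  using imp_mp imp_trans ax5 by blast

lemma and_mono: "iK4Leplus (Imp A C) \<Longrightarrow> iK4Leplus (Imp B D) \<Longrightarrow> iK4Leplus (Imp (And A B) (And C D))"
  using and_intro imp_trans ax3 ax4 by blast

lemma or_mono: "iK4Leplus (Imp A C) \<Longrightarrow> iK4Leplus (Imp B D) \<Longrightarrow> iK4Leplus (Imp (Or A B) (Or C D))"
proof -
  assume "iK4Leplus (Imp A C)" and "iK4Leplus (Imp B D)"
  then have "iK4Leplus (Imp A (Or C D))" and "iK4Leplus (Imp B (Or C D))"
    using imp_trans ax6 ax7 by blast+
  then show ?thesis
    using ax8 mp by blast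
qed

lemma box_mono: "iK4Leplus (Imp A B) \<Longrightarrow> iK4Leplus (Imp (Box A) (Box B))"
  using nec axK mp by blast

lemma boxdot_imp_self: "iK4Leplus (Imp (boxdot A) A)"
  unfolding boxdot_def by (rule ax3)

lemma boxdot_imp_box: "iK4Leplus (Imp (boxdot A) (Box A))"
  unfolding boxdot_def by (rule ax4)

lemma lv_imp_self: "iK4Leplus (Imp (lv A) A)"
proof (induction A)
  case (And A B)
  then show ?case by (simp add: and_mono)
next
  case (Or A B)
  then show ?case by (simp add: or_mono imp_trans[OF boxdot_imp_self])
next
  case (Imp A B)
  then show ?case by (simp add: imp_mono_concl imp_refl)
qed (simp_all add: imp_refl)

theorem lemma4p19:
  shows "iK4Leplus (Imp (Box (Or B C)) (Box (Or (Box B) C)))"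
proof -
  have "iK4Leplus (Imp (Box (Or B C)) (Box (Or (boxdot (lv B)) (boxdot (lv C)))))"
    using axLeplus[of "Or B C"] by simp
  moreover have "iK4Leplus (Imp (boxdot (lv B)) (Box B))"
    using imp_trans[OF boxdot_imp_box box_mono[OF lv_imp_self]] .
  moreover have "iK4Leplus (Imp (boxdot (lv C)) C)"
    using imp_trans[OF boxdot_imp_self lv_imp_self] .
  ultimately show ?thesis
    using imp_trans box_mono or_mono by blast
qed

end
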